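(* (Pasting Lemma in $\mathsf{PsTop}$.) Let $X$ be a pseudotopological space and let $\{X_j\}_{j\in J}$ be a cover of $X$ such that either (1) every $X_j$ is open in the topological space $RX$, or (2) every $X_j$ is closed in $RX$ and the family $\{X_j\}_{j\in J}$ is locally finite in $RX$ (every point has a neighbourhood in $RX$ meeting only finitely many $X_j$). Let $Y$ be a pseudotopological space and $f\colon X\to Y$ a function such that each restriction $f_j=f|_{X_j}\colon X_j\to Y$ is continuous, where $X_j$ carries the subspace pseudotopology. Then $f$ is continuous.
   Context: For a set $X$, $U(X)$ denotes the set of ultrafilters on $X$ and $\dot x$ the principal ultrafilter at $x\in X$. For a map $f\colon X\to Y$ and a filter $\mathscr F$ on $X$, $f_*\mathscr F=\{S\subset Y: f^{-1}(S)\in\mathscr F\}$ (an ultrafilter if $\mathscr F$ is). A pseudotopological structure on a set $X$ is a relation $u\subset U(X)\times X$ with $(\dot x,x)\in u$ for all $x\in X$; one writes $\mathscr U\to x$ for $(\mathscr U,x)\in u$, and $(X,u)$ is called a pseudotopological space. A map $f$ between pseudotopological spaces is continuous if $\mathscr U\to x$ implies $f_*\mathscr U\to f(x)$. For a subset $A\subset X$ with inclusion $i$, the subspace pseudotopology on $A$ is: $\mathscr U\to a$ in $A$ iff $i_*\mathscr U\to a$ in $X$. For a pseudotopological space $X$, $RX$ is the topological space with the same underlying set in which a set $S$ is open iff $S\in\mathscr U$ whenever $\mathscr U\to x$ with $x\in S$. *)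

theory Defs
  imports "HOL-Analysis.Analysis"
begin

definition ultrafilter_on :: "'a set \<Rightarrow> 'a set set \<Rightarrow> bool" where
  "ultrafilter_on X U \<longleftrightarrow>
     U \<subseteq> Pow X \<and> X \<in> U \<and> {} \<notin> U \<and>
     (\<forall>A B. A \<in> U \<and> B \<in> U \<longrightarrow> A \<inter> B \<in> U) \<and>
     (\<forall>A B. A \<in> U \<and> A \<subseteq> B \<and> B \<subseteq> X \<longrightarrow> B \<in> U) \<and>
     (\<forall>A. A \<subseteq> X \<longrightarrow> A \<in> U \<or> X - A \<in> U)"

definition principal_uf :: "'a set \<Rightarrow> 'a \<Rightarrow> 'a set set" where
  "principal_uf X x = {S. S \<subseteq> X \<and> x \<in> S}"

definition pushf :: "'a set \<Rightarrow> 'b set \<Rightarrow> ('a \<Rightarrow> 'b) \<Rightarrow> 'a set set \<Rightarrow> 'b set set" where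
  "pushf X Y f U = {S. S \<subseteq> Y \<and> {x \<in> X. f x \<in> S} \<in> U}"

definition pseudotop :: "'a set \<Rightarrow> ('a set set \<times> 'a) set \<Rightarrow> bool" where
  "pseudotop X u \<longleftrightarrow>
     (\<forall>(U, x) \<in> u. ultrafilter_on X U \<and> x \<in> X) \<and>
     (\<forall>x \<in> X. (principal_uf X x, x) \<in> u)"

definition ps_continuous ::
  "'a set \<Rightarrow> ('a set set \<times> 'a) set \<Rightarrow> 'b set \<Rightarrow> ('b set set \<times> 'b) set \<Rightarrow> ('a \<Rightarrow> 'b) \<Rightarrow> bool" where
  "ps_continuous X u Y v f \<longleftrightarrow>
     f ` X \<subseteq> Y \<and> (\<forall>U x. (U, x) \<in> u \<longrightarrow> (pushf X Y f U, f x) \<in> v)"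

definition subspace_ps :: "'a set \<Rightarrow> ('a set set \<times> 'a) set \<Rightarrow> 'a set \<Rightarrow> ('a set set \<times> 'a) set" where
  "subspace_ps X u A =
     {(U, a). ultrafilter_on A U \<and> a \<in> A \<and> (pushf A X (\<lambda>y. y) U, a) \<in> u}"

definition R_open :: "'a set \<Rightarrow> ('a set set \<times> 'a) set \<Rightarrow> 'a set \<Rightarrow> bool" where
  "R_open X u S \<longleftrightarrow>
     S \<subseteq> X \<and> (\<forall>U x. (U, x) \<in> u \<and> ultrafilter_on X U \<and> x \<in> S \<longrightarrow> S \<in> U)"

lemma istopology_R_open: "istopology (R_open X u)"
proof -
  have inter: "R_open X u (S \<inter> T)" if "R_open X u S" "R_open X u T" for S T
    using that unfolding R_open_def ultrafilter_on_def by blast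
  have union: "R_open X u (\<Union>K)" if H: "\<forall>S\<in>K. R_open X u S" for K
    unfolding R_open_def
  proof (intro conjI allI impI)
    show "\<Union>K \<subseteq> X" using H unfolding R_open_def by blast
  next
    fix U x assume a: "(U, x) \<in> u \<and> ultrafilter_on X U \<and> x \<in> \<Union>K"
    then obtain S where S: "S \<in> K" "x \<in> S" by blast
    with H a have "S \<in> U" unfolding R_open_def by blast
    moreover have "S \<subseteq> \<Union>K" "\<Union>K \<subseteq> X" using S H unfolding R_open_def by blast+
    ultimately show "\<Union>K \<in> U" using a unfolding ultrafilter_on_def by blast
  qed
  show ?thesis unfolding istopology_def using inter union by blast
qed

definition RX :: "'a set \<Rightarrow> ('a set set \<times> 'a) set \<Rightarrow> 'a topology" where
  "RX X u = topology (R_open X u)"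

lemma openin_RX: "openin (RX X u) S \<longleftrightarrow> R_open X u S"
  unfolding RX_def using istopology_R_open by (simp add: istopology_R_open)

definition locally_finite_family :: "'a topology \<Rightarrow> 'i set \<Rightarrow> ('i \<Rightarrow> 'a set) \<Rightarrow> bool" where
  "locally_finite_family T J A \<longleftrightarrow>
     (\<forall>x \<in> topspace T. \<exists>N. x \<in> N \<and> (\<exists>W. openin T W \<and> x \<in> W \<and> W \<subseteq> N) \<and>
        finite {j \<in> J. A j \<inter> N \<noteq> {}})"

end

theory Submission
  imports Defs
begin

text \<open>Every convergent ultrafilter contains a member of the cover that contains its limit.
  For an open cover this member is any one containing the limit. In the locally finite closed
  case, the ultrafilter contains a neighbourhood of the limit meeting only finitely many members,
  hence one of these, and a closed set belonging to an ultrafilter contains all its limits.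
  The trace of the ultrafilter on that member converges in the subspace and has the same image
  under f.\<close>

lemma
  assumes "ultrafilter_on X U"
  shows ultrafilter_on_Pow: "U \<subseteq> Pow X"
    and ultrafilter_on_top: "X \<in> U"
    and ultrafilter_on_empty: "{} \<notin> U"
    and ultrafilter_on_Int: "A \<in> U \<Longrightarrow> B \<in> U \<Longrightarrow> A \<inter> B \<in> U"
    and ultrafilter_on_mono: "A \<in> U \<Longrightarrow> A \<subseteq> B \<Longrightarrow> B \<subseteq> X \<Longrightarrow> B \<in> U"
    and ultrafilter_on_compl: "A \<subseteq> X \<Longrightarrow> A \<notin> U \<Longrightarrow> X - A \<in> U"
  using assms unfolding ultrafilter_on_def by (simp_all, blast)

lemma ultrafilter_on_subset: "ultrafilter_on X U \<Longrightarrow> S \<in> U \<Longrightarrow> S \<subseteq> X"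
  using ultrafilter_on_Pow by blast

lemma ultrafilter_on_disjoint: "ultrafilter_on X U \<Longrightarrow> A \<in> U \<Longrightarrow> B \<in> U \<Longrightarrow> A \<inter> B \<noteq> {}"
  using ultrafilter_on_Int ultrafilter_on_empty by metis

lemma ultrafilter_on_Un:
  assumes uf: "ultrafilter_on X U" and "A \<union> B \<in> U" "A \<subseteq> X" "B \<subseteq> X" "A \<notin> U"
  shows "B \<in> U"
proof -
  have "(A \<union> B) \<inter> (X - A) \<in> U"
    using ultrafilter_on_Int[OF uf] ultrafilter_on_compl[OF uf] assms(2-) by blast
  moreover have "(A \<union> B) \<inter> (X - A) \<subseteq> B" by blast
  ultimately show ?thesis using ultrafilter_on_mono[OF uf] \<open>B \<subseteq> X\<close> by blast
qed

lemma ultrafilter_on_UN_finite: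
  assumes uf: "ultrafilter_on X U" and "finite F"
    and "(\<Union>j\<in>F. A j) \<in> U" and "\<forall>j\<in>F. A j \<subseteq> X"
  shows "\<exists>j\<in>F. A j \<in> U"
  using assms(2-)
proof (induction F rule: finite_induct)
  case empty
  then show ?case using ultrafilter_on_empty[OF uf] by simp
next
  case (insert k F)
  then show ?case using ultrafilter_on_Un[OF uf, of "A k" "\<Union>j\<in>F. A j"] by auto
qed

lemma ultrafilter_on_trace:
  assumes uf: "ultrafilter_on X U" and A: "A \<in> U"
  shows "ultrafilter_on A (Pow A \<inter> U)"
  unfolding ultrafilter_on_def
proof (intro conjI allI impI)
  have "A \<subseteq> X" using ultrafilter_on_subset[OF uf A] .
  fix S assume "S \<subseteq> A"
  show "S \<in> Pow A \<inter> U \<or> A - S \<in> Pow A \<inter> U"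
  proof (cases "S \<in> U")
    case False
    then have "(X - S) \<inter> A \<in> U"
      using ultrafilter_on_Int[OF uf _ A] ultrafilter_on_compl[OF uf] \<open>S \<subseteq> A\<close> \<open>A \<subseteq> X\<close> by blast
    moreover have "(X - S) \<inter> A = A - S" using \<open>A \<subseteq> X\<close> by blast
    ultimately show ?thesis by simp
  qed (use \<open>S \<subseteq> A\<close> in simp)
qed (use A ultrafilter_on_empty[OF uf] ultrafilter_on_Int[OF uf] ultrafilter_on_mono[OF uf]
  ultrafilter_on_subset[OF uf A] in auto)

lemma pushf_trace:
  assumes uf: "ultrafilter_on X U" and A: "A \<in> U"
  shows "pushf A Y f (Pow A \<inter> U) = pushf X Y f U"
proof -
  have "A \<subseteq> X" using ultrafilter_on_subset[OF uf A] .
  have "{y \<in> A. f y \<in> S} \<in> U \<longleftrightarrow> {y \<in> X. f y \<in> S} \<in> U" for S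
  proof
    assume "{y \<in> A. f y \<in> S} \<in> U"
    moreover have "{y \<in> A. f y \<in> S} \<subseteq> {y \<in> X. f y \<in> S}" using \<open>A \<subseteq> X\<close> by blast
    ultimately show "{y \<in> X. f y \<in> S} \<in> U" using ultrafilter_on_mono[OF uf] by blast
  next
    assume "{y \<in> X. f y \<in> S} \<in> U"
    then have "{y \<in> X. f y \<in> S} \<inter> A \<in> U" using ultrafilter_on_Int[OF uf _ A] by blast
    moreover have "{y \<in> X. f y \<in> S} \<inter> A = {y \<in> A. f y \<in> S}" using \<open>A \<subseteq> X\<close> by blast
    ultimately show "{y \<in> A. f y \<in> S} \<in> U" by simp
  qed
  then show ?thesis unfolding pushf_def by auto
qed

lemma pushf_id:
  assumes uf: "ultrafilter_on X U"
  shows "pushf X X (\<lambda>y. y) U = U"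
proof (intro set_eqI iffI)
  fix S assume "S \<in> pushf X X (\<lambda>y. y) U"
  then have "S \<subseteq> X" "{y \<in> X. y \<in> S} \<in> U" unfolding pushf_def by auto
  moreover have "{y \<in> X. y \<in> S} = S" using \<open>S \<subseteq> X\<close> by blast
  ultimately show "S \<in> U" by simp
next
  fix S assume "S \<in> U"
  moreover have "S \<subseteq> X" using ultrafilter_on_subset[OF uf \<open>S \<in> U\<close>] .
  moreover have "{y \<in> X. y \<in> S} = S" using \<open>S \<subseteq> X\<close> by blast
  ultimately show "S \<in> pushf X X (\<lambda>y. y) U" unfolding pushf_def by simp
qed

lemma
  assumes "pseudotop X u" "(U, x) \<in> u"
  shows pseudotop_ultrafilter_on: "ultrafilter_on X U" and pseudotop_limit_in: "x \<in> X"
  using assms unfolding pseudotop_def by fast+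

lemma trace_in_subspace_ps:
  assumes ps: "pseudotop X u" and Ux: "(U, x) \<in> u" and "A \<in> U" "x \<in> A"
  shows "(Pow A \<inter> U, x) \<in> subspace_ps X u A"
proof -
  note uf = pseudotop_ultrafilter_on[OF ps Ux]
  have "pushf A X (\<lambda>y. y) (Pow A \<inter> U) = U"
    using pushf_trace[OF uf \<open>A \<in> U\<close>] pushf_id[OF uf] by (rule trans)
  with ultrafilter_on_trace[OF uf \<open>A \<in> U\<close>] Ux \<open>x \<in> A\<close> show ?thesis
    unfolding subspace_ps_def by simp
qed

lemma topspace_RX: "topspace (RX X u) = X"
  unfolding topspace_def openin_RX
proof (rule antisym)
  show "\<Union>{S. R_open X u S} \<subseteq> X" by (rule Sup_least) (simp add: R_open_def)
  show "X \<subseteq> \<Union>{S. R_open X u S}" by (rule Union_upper) (auto simp: R_open_def ultrafilter_on_top)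
qed

lemma openin_RX_in_ultrafilter:
  assumes "pseudotop X u" "(U, x) \<in> u" "openin (RX X u) S" "x \<in> S"
  shows "S \<in> U"
  using assms pseudotop_ultrafilter_on[OF assms(1,2)] unfolding openin_RX R_open_def by blast

lemma closedin_RX_limit:
  assumes ps: "pseudotop X u" and Ux: "(U, x) \<in> u" and "closedin (RX X u) C" "C \<in> U"
  shows "x \<in> C"
proof (rule ccontr)
  assume "x \<notin> C"
  have "openin (RX X u) (X - C)" using \<open>closedin (RX X u) C\<close> unfolding closedin_def topspace_RX by simp
  then have "X - C \<in> U"
    using openin_RX_in_ultrafilter[OF ps Ux] pseudotop_limit_in[OF ps Ux] \<open>x \<notin> C\<close> by simp
  then show False using ultrafilter_on_disjoint[OF pseudotop_ultrafilter_on[OF ps Ux] _ \<open>C \<in> U\<close>] by blast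
qed

lemma locally_finite_family_in_ultrafilter:
  assumes ps: "pseudotop X u" and Ux: "(U, x) \<in> u"
    and cover: "(\<Union>j\<in>J. A j) = X" and lf: "locally_finite_family (RX X u) J A"
  shows "\<exists>j\<in>J. A j \<in> U"
proof -
  note uf = pseudotop_ultrafilter_on[OF ps Ux]
  obtain N W where "openin (RX X u) W" "x \<in> W" "W \<subseteq> N"
      and fin: "finite {j \<in> J. A j \<inter> N \<noteq> {}}"
    using lf pseudotop_limit_in[OF ps Ux] unfolding locally_finite_family_def topspace_RX by blast
  then have "W \<in> U" using openin_RX_in_ultrafilter[OF ps Ux] by blast
  have "W \<subseteq> X" using ultrafilter_on_subset[OF uf \<open>W \<in> U\<close>] .
  have "(\<Union>j\<in>{j \<in> J. A j \<inter> N \<noteq> {}}. A j \<inter> W) = W"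
    using \<open>W \<subseteq> X\<close> cover \<open>W \<subseteq> N\<close> by blast
  then obtain j where "j \<in> J" "A j \<inter> W \<in> U"
    using ultrafilter_on_UN_finite[OF uf fin, of "\<lambda>j. A j \<inter> W"] \<open>W \<in> U\<close> \<open>W \<subseteq> X\<close> by auto
  moreover have "A j \<subseteq> X" using cover \<open>j \<in> J\<close> by blast
  ultimately show ?thesis using ultrafilter_on_mono[OF uf, of "A j \<inter> W" "A j"] by blast
qed

lemma ps_continuous_if_locally_continuous:
  assumes ps: "pseudotop X u" and cover: "(\<Union>j\<in>J. A j) = X"
    and local: "\<And>U x. (U, x) \<in> u \<Longrightarrow> \<exists>j\<in>J. x \<in> A j \<and> A j \<in> U"
    and cont: "\<forall>j\<in>J. ps_continuous (A j) (subspace_ps X u (A j)) Y v f"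
  shows "ps_continuous X u Y v f"
  unfolding ps_continuous_def
proof (intro conjI allI impI)
  show "f ` X \<subseteq> Y" using cont cover unfolding ps_continuous_def by blast
next
  fix U x assume Ux: "(U, x) \<in> u"
  then obtain j where j: "j \<in> J" "x \<in> A j" "A j \<in> U" using local by blast
  have "(pushf (A j) Y f (Pow (A j) \<inter> U), f x) \<in> v"
    using trace_in_subspace_ps[OF ps Ux j(3,2)] cont j(1) unfolding ps_continuous_def by blast
  then show "(pushf X Y f U, f x) \<in> v"
    using pushf_trace[OF pseudotop_ultrafilter_on[OF ps Ux] j(3), of Y f] by simp
qed

theorem lemma3p2:
  fixes X :: "'a set" and u :: "('a set set \<times> 'a) set"
    and Y :: "'b set" and v :: "('b set set \<times> 'b) set"
    and J :: "'i set" and XJ :: "'i \<Rightarrow> 'a set"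
    and f :: "'a \<Rightarrow> 'b"
  assumes psX: "pseudotop X u"
    and psY: "pseudotop Y v"
    and cover: "(\<Union>j\<in>J. XJ j) = X"
    and cases: "(\<forall>j\<in>J. openin (RX X u) (XJ j)) \<or>
                ((\<forall>j\<in>J. closedin (RX X u) (XJ j)) \<and> locally_finite_family (RX X u) J XJ)"
    and cont: "\<forall>j\<in>J. ps_continuous (XJ j) (subspace_ps X u (XJ j)) Y v f"
  shows "ps_continuous X u Y v f"
proof (rule ps_continuous_if_locally_continuous[OF psX cover _ cont])
  fix U x assume Ux: "(U, x) \<in> u"
  from cases show "\<exists>j\<in>J. x \<in> XJ j \<and> XJ j \<in> U"
  proof
    assume "\<forall>j\<in>J. openin (RX X u) (XJ j)"
    moreover obtain j where "j \<in> J" "x \<in> XJ j"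
      using pseudotop_limit_in[OF psX Ux] cover by blast
    ultimately show ?thesis using openin_RX_in_ultrafilter[OF psX Ux] by blast
  next
    assume closed: "(\<forall>j\<in>J. closedin (RX X u) (XJ j)) \<and> locally_finite_family (RX X u) J XJ"
    then obtain j where "j \<in> J" "XJ j \<in> U"
      using locally_finite_family_in_ultrafilter[OF psX Ux cover] by blast
    then show ?thesis using closedin_RX_limit[OF psX Ux] closed by blast
  qed
qed
end
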